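(* If $G$ is a finite nonabelian group, then $Z_{K(G)}=\bigcap_{\psi\in\mathcal{X}}Z(\psi)$.
   Context: For $\chi\in\mathrm{Irr}(G)$, the center of $\chi$ is $Z(\chi)=\{g\in G : |\chi(g)|=\chi(1)\}$. Let $\mathcal{X}=\{\chi\in\mathrm{Irr}(G) : Z(\chi)>Z(G)\}$ (strict containment) and $K(G)=\bigcap_{\chi\in\mathcal{X}}\ker(\chi)$. For a normal subgroup $N$ of $G$, $Z_N$ is defined by $Z_N/N=Z(G/N)$. *)

theory Defs
  imports "HOL-Algebra.Algebra" "Jordan_Normal_Form.Matrix"
begin

definition group_center :: "('a, 'b) monoid_scheme \<Rightarrow> 'a set" where
  "group_center G = {z \<in> carrier G. \<forall>x \<in> carrier G. z \<otimes>\<^bsub>G\<^esub> x = x \<otimes>\<^bsub>G\<^esub> z}"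

definition Z_rel :: "('a, 'b) monoid_scheme \<Rightarrow> 'a set \<Rightarrow> 'a set" where
  "Z_rel G N = {g \<in> carrier G. N #>\<^bsub>G\<^esub> g \<in> group_center (G Mod N)}"

definition mat_trace :: "complex mat \<Rightarrow> complex" where
  "mat_trace A = (\<Sum>i<dim_row A. A $$ (i, i))"

definition representation :: "('a, 'b) monoid_scheme \<Rightarrow> nat \<Rightarrow> ('a \<Rightarrow> complex mat) \<Rightarrow> bool" where
  "representation G n \<rho> \<longleftrightarrow>
     (\<forall>g \<in> carrier G. \<rho> g \<in> carrier_mat n n) \<and>
     (\<forall>g \<in> carrier G. \<forall>h \<in> carrier G. \<rho> (g \<otimes>\<^bsub>G\<^esub> h) = \<rho> g * \<rho> h) \<and>
     \<rho> \<one>\<^bsub>G\<^esub> = 1\<^sub>m n"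

definition invariant_subspace :: "('a, 'b) monoid_scheme \<Rightarrow> nat \<Rightarrow> ('a \<Rightarrow> complex mat) \<Rightarrow> complex vec set \<Rightarrow> bool" where
  "invariant_subspace G n \<rho> W \<longleftrightarrow>
     W \<subseteq> carrier_vec n \<and> 0\<^sub>v n \<in> W \<and>
     (\<forall>v \<in> W. \<forall>w \<in> W. v + w \<in> W) \<and>
     (\<forall>c :: complex. \<forall>v \<in> W. c \<cdot>\<^sub>v v \<in> W) \<and>
     (\<forall>g \<in> carrier G. \<forall>v \<in> W. \<rho> g *\<^sub>v v \<in> W)"

definition irreducible_rep :: "('a, 'b) monoid_scheme \<Rightarrow> nat \<Rightarrow> ('a \<Rightarrow> complex mat) \<Rightarrow> bool" where
  "irreducible_rep G n \<rho> \<longleftrightarrow> representation G n \<rho> \<and> n > 0 \<and>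
     (\<forall>W. invariant_subspace G n \<rho> W \<longrightarrow> W = {0\<^sub>v n} \<or> W = carrier_vec n)"

definition Irr :: "('a, 'b) monoid_scheme \<Rightarrow> ('a \<Rightarrow> complex) set" where
  "Irr G = {\<chi>. \<exists>n \<rho>. irreducible_rep G n \<rho> \<and> \<chi> = (\<lambda>g \<in> carrier G. mat_trace (\<rho> g))}"

definition char_center :: "('a, 'b) monoid_scheme \<Rightarrow> ('a \<Rightarrow> complex) \<Rightarrow> 'a set" where
  "char_center G \<chi> = {g \<in> carrier G. complex_of_real (cmod (\<chi> g)) = \<chi> \<one>\<^bsub>G\<^esub>}"

definition char_kernel :: "('a, 'b) monoid_scheme \<Rightarrow> ('a \<Rightarrow> complex) \<Rightarrow> 'a set" where
  "char_kernel G \<chi> = {g \<in> carrier G. \<chi> g = \<chi> \<one>\<^bsub>G\<^esub>}"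

definition XX :: "('a, 'b) monoid_scheme \<Rightarrow> ('a \<Rightarrow> complex) set" where
  "XX G = {\<chi> \<in> Irr G. group_center G \<subset> char_center G \<chi>}"

text \<open>K(G): intersection of kernels over X (taken inside carrier G; equals G if X is empty).\<close>
definition KK :: "('a, 'b) monoid_scheme \<Rightarrow> 'a set" where
  "KK G = carrier G \<inter> (\<Inter>\<chi> \<in> XX G. char_kernel G \<chi>)"

end

(*
  For an irreducible representation rho of a finite group with character chi, the matrix rho(g)
  has finite order. After Schur triangularisation its diagonal consists of roots of unity,
  |chi(g)| = chi(1) forces them all to be equal, and a triangular matrix of finite order with
  constant diagonal is scalar in characteristic 0: a nontrivial Jordan chain v, w would make
  B^k v contain the term k c^(k-1) w. So Z(chi) consists of the g with rho(g) scalar, which by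
  Schur's lemma are those g whose commutators [g, x] all lie in ker chi; that is,
  Z(chi) = Z_(ker chi). Since membership in Z_N is a condition on commutators, it commutes with
  intersections of normal subgroups, and K(G) = (INT psi:X. ker psi) yields the theorem.
*)

theory Submission
  imports Defs "Jordan_Normal_Form.Schur_Decomposition"
begin

section \<open>Matrices of finite order\<close>

lemma mat_trace_mult_comm:
  fixes C D :: "complex mat"
  assumes C: "C \<in> carrier_mat n m" and D: "D \<in> carrier_mat m n"
  shows "mat_trace (C * D) = mat_trace (D * C)"
proof -
  have "mat_trace (C * D) = (\<Sum>i<n. \<Sum>k<m. C $$ (i,k) * D $$ (k,i))"
    using C D by (simp add: mat_trace_def scalar_prod_def atLeast0LessThan)
  also have "\<dots> = (\<Sum>k<m. \<Sum>i<n. D $$ (k,i) * C $$ (i,k))"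
    by (subst sum.swap) (simp add: mult.commute)
  also have "\<dots> = mat_trace (D * C)"
    using C D by (simp add: mat_trace_def scalar_prod_def atLeast0LessThan)
  finally show ?thesis .
qed

lemma similar_mat_wit_mat_trace:
  assumes "similar_mat_wit A B P Q"
  shows "mat_trace A = mat_trace B"
proof -
  obtain n where c: "{A, B, P, Q} \<subseteq> carrier_mat n n" "Q * P = 1\<^sub>m n" and A: "A = P * B * Q"
    using similar_mat_witD[OF refl assms] by blast
  have "mat_trace A = mat_trace (P * (B * Q))" using A c by (simp add: assoc_mult_mat[of P n n B n Q n])
  also have "\<dots> = mat_trace ((B * Q) * P)" using c by (intro mat_trace_mult_comm) auto
  also have "(B * Q) * P = B" using c by (simp add: assoc_mult_mat[of B n n Q n P n] right_mult_one_mat[of B n n])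
  finally show ?thesis .
qed

lemma mat_trace_smult_one: "mat_trace (u \<cdot>\<^sub>m 1\<^sub>m n) = u * of_nat n"
  by (simp add: mat_trace_def)

lemma smult_one_mat_pow: "(u \<cdot>\<^sub>m 1\<^sub>m n) ^\<^sub>m k = (u ^ k :: 'a :: comm_semiring_1) \<cdot>\<^sub>m 1\<^sub>m n"
proof (induction k)
  case (Suc k)
  have diag: "\<And>i j. (u ^ k * (if i = j then 1 else 0) * (u * (if i = j then 1 else 0)) :: 'a)
      = (if i = j then u * u ^ k else 0)" by (simp add: power_commutes)
  from Suc show ?case by (intro eq_matI) (auto simp: scalar_prod_def diag)
qed (intro eq_matI, auto)

lemma one_smult_one_mat [simp]: "(1 :: 'a :: semiring_1) \<cdot>\<^sub>m 1\<^sub>m n = 1\<^sub>m n"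
  by (intro eq_matI) auto

lemma smult_one_mat_eq_iff:
  assumes "n > 0"
  shows "(u \<cdot>\<^sub>m 1\<^sub>m n = (c :: 'a :: semiring_1) \<cdot>\<^sub>m 1\<^sub>m n) \<longleftrightarrow> u = c"
proof
  assume "u \<cdot>\<^sub>m 1\<^sub>m n = c \<cdot>\<^sub>m 1\<^sub>m n"
  then have "(u \<cdot>\<^sub>m 1\<^sub>m n) $$ (0, 0) = (c \<cdot>\<^sub>m 1\<^sub>m n) $$ (0, 0)" by simp
  then show "u = c" using assms by simp
qed simp

lemma unit_sum_norm_eq_card_imp_average:
  fixes f :: "'i \<Rightarrow> complex"
  assumes I: "finite I" and f1: "\<And>i. i \<in> I \<Longrightarrow> cmod (f i) = 1"
    and S: "cmod (sum f I) = real (card I)" and i: "i \<in> I"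
  shows "f i = sum f I / of_nat (card I)"
proof -
  define u where "u = sum f I / of_nat (card I)"
  have card: "card I > 0" using I i by (auto simp: card_gt_0_iff)
  have u1: "cmod u = 1" using S card unfolding u_def by (simp add: norm_divide)
  have le: "Re (f j * cnj u) \<le> 1" if "j \<in> I" for j
    using complex_Re_le_cmod[of "f j * cnj u"] f1[OF that] u1 by (simp add: norm_mult)
  have "(\<Sum>j\<in>I. Re (f j * cnj u)) = Re (sum f I * cnj u)"
    by (simp add: sum_distrib_right)
  also have "sum f I * cnj u = sum f I * cnj (sum f I) / of_nat (card I)"
    unfolding u_def by simp
  also have "sum f I * cnj (sum f I) = of_real ((cmod (sum f I))\<^sup>2)"
    by (rule complex_norm_square[symmetric])
  also have "Re (of_real ((cmod (sum f I))\<^sup>2) / of_nat (card I)) = card I"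
    using S card by (simp add: power2_eq_square)
  finally have "(\<Sum>j\<in>I. 1 - Re (f j * cnj u)) = 0" by (simp add: sum_subtractf)
  then have "Re (f i * cnj u) = 1"
    using sum_nonneg_eq_0_iff[OF I, of "\<lambda>j. 1 - Re (f j * cnj u)"] le i by auto
  moreover have "cmod (f i * cnj u) = 1" using f1[OF i] u1 by (simp add: norm_mult)
  ultimately have "f i * cnj u = 1"
    by (simp add: complex_eq_iff cmod_def)
  moreover have "cnj u * u = 1"
    using u1 by (metis complex_norm_square mult.commute of_real_1 one_power2)
  ultimately have "f i = u" by (metis mult.assoc mult.left_neutral mult.right_neutral)
  then show ?thesis unfolding u_def .
qed

lemma poly_linear_factors_eq_0: "(x :: 'a :: comm_ring_1) \<in> set as \<Longrightarrow> poly (\<Prod>a\<leftarrow>as. [:- a, 1:]) x = 0"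
  by (induction as) (auto simp: algebra_simps)

lemma upper_triangular_diag_eigenvalue:
  fixes B :: "'a :: field mat"
  assumes B: "B \<in> carrier_mat n n" and ut: "upper_triangular B" and i: "i < n"
  shows "eigenvalue B (B $$ (i, i))"
  unfolding eigenvalue_root_char_poly[OF B] char_poly_upper_triangular[OF B ut]
  using B i by (intro poly_linear_factors_eq_0) (auto simp: diag_mat_def)

lemma complex_mat_eigenvalue_exists:
  fixes A :: "complex mat"
  assumes A: "A \<in> carrier_mat n n" and n: "n > 0"
  shows "\<exists>c. eigenvalue A c"
proof -
  obtain as where as: "char_poly A = (\<Prod>a\<leftarrow>as. [:- a, 1:])" "length as = n"
    using char_poly_factorized[OF A] by auto
  then obtain c where "c \<in> set as" using n by (cases as) auto
  then show ?thesis unfolding eigenvalue_root_char_poly[OF A] as(1) by (blast intro: poly_linear_factors_eq_0)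
qed

lemma smult_vec_eq_self_imp_one:
  assumes v: "v \<in> carrier_vec n" "v \<noteq> 0\<^sub>v n" and eq: "c \<cdot>\<^sub>v v = v"
  shows "(c :: 'a :: idom) = 1"
proof -
  obtain j where j: "j < n" "v $ j \<noteq> 0" using v by (metis eq_vecI carrier_vecD index_zero_vec)
  have "c * v $ j = v $ j" using arg_cong[OF eq, of "\<lambda>x. x $ j"] j v by simp
  then show ?thesis using j by simp
qed

lemma eigenvalue_finite_order_root_of_unity:
  fixes A :: "'a :: idom mat"
  assumes A: "A \<in> carrier_mat n n" and pw: "A ^\<^sub>m m = 1\<^sub>m n" and ev: "eigenvalue A c"
  shows "c ^ m = 1"
proof -
  obtain v where v: "eigenvector A v c" using ev unfolding eigenvalue_def by auto
  then have "v \<in> carrier_vec n" "v \<noteq> 0\<^sub>v n" using A unfolding eigenvector_def by auto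
  moreover have "c ^ m \<cdot>\<^sub>v v = v" using eigenvector_pow[OF A v, of m] pw \<open>v \<in> carrier_vec n\<close> by simp
  ultimately show ?thesis by (rule smult_vec_eq_self_imp_one)
qed

lemma mat_pow_mult_vec_eigen:
  fixes B :: "'a :: field mat"
  assumes B: "B \<in> carrier_mat n n" and w: "w \<in> carrier_vec n" and Bw: "B *\<^sub>v w = c \<cdot>\<^sub>v w"
  shows "B ^\<^sub>m k *\<^sub>v w = c ^ k \<cdot>\<^sub>v w"
proof (induction k)
  case (Suc k)
  have "B ^\<^sub>m Suc k *\<^sub>v w = B ^\<^sub>m k *\<^sub>v (B *\<^sub>v w)"
    using B w by (simp add: assoc_mult_mat_vec[of _ n n B n w])
  also have "\<dots> = c ^ Suc k \<cdot>\<^sub>v w"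
    using B w Suc by (simp add: Bw mult_mat_vec[of _ n n] smult_smult_assoc)
  finally show ?case .
qed (use B w in simp)

lemma mat_pow_mult_vec_Jordan_chain:
  fixes B :: "'a :: field mat"
  assumes B: "B \<in> carrier_mat n n" and v: "v \<in> carrier_vec n" and w: "w \<in> carrier_vec n"
    and Bv: "B *\<^sub>v v = c \<cdot>\<^sub>v v + w" and Bw: "B *\<^sub>v w = c \<cdot>\<^sub>v w"
  shows "B ^\<^sub>m Suc k *\<^sub>v v = c ^ Suc k \<cdot>\<^sub>v v + (of_nat (Suc k) * c ^ k) \<cdot>\<^sub>v w"
proof (induction k)
  case 0
  then show ?case using B v by (simp add: Bv)
next
  case (Suc k)
  have "B ^\<^sub>m Suc (Suc k) *\<^sub>v v = B ^\<^sub>m Suc k *\<^sub>v (B *\<^sub>v v)"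
    unfolding pow_mat.simps(2)[of B "Suc k"] using B v
    by (intro assoc_mult_mat_vec[of _ n n B n v]) (auto simp del: pow_mat.simps)
  also have "\<dots> = c \<cdot>\<^sub>v (B ^\<^sub>m Suc k *\<^sub>v v) + c ^ Suc k \<cdot>\<^sub>v w"
    using B v w by (simp add: Bv mult_add_distrib_mat_vec[of _ n n] mult_mat_vec[of _ n n]
        mat_pow_mult_vec_eigen[OF B w Bw] del: pow_mat.simps)
  also have "\<dots> = c ^ Suc (Suc k) \<cdot>\<^sub>v v + (of_nat (Suc (Suc k)) * c ^ Suc k) \<cdot>\<^sub>v w"
    unfolding Suc using v w by (intro eq_vecI) (auto simp: algebra_simps)
  finally show ?case .
qed

lemma finite_order_Jordan_chain_trivial:
  fixes B :: "'a :: field_char_0 mat"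
  assumes B: "B \<in> carrier_mat n n" and v: "v \<in> carrier_vec n" and w: "w \<in> carrier_vec n"
    and pw: "B ^\<^sub>m m = 1\<^sub>m n" and m: "m > 0"
    and Bv: "B *\<^sub>v v = c \<cdot>\<^sub>v v + w" and Bw: "B *\<^sub>v w = c \<cdot>\<^sub>v w"
  shows "w = 0\<^sub>v n"
proof (rule ccontr)
  assume w0: "w \<noteq> 0\<^sub>v n"
  have "c ^ m \<cdot>\<^sub>v w = w" using mat_pow_mult_vec_eigen[OF B w Bw, of m] pw w by simp
  then have cm: "c ^ m = 1" by (rule smult_vec_eq_self_imp_one[OF w w0])
  obtain k where k: "m = Suc k" using m by (cases m) auto
  have vv: "v = v + (of_nat m * c ^ k) \<cdot>\<^sub>v w"
    using mat_pow_mult_vec_Jordan_chain[OF B v w Bv Bw, of k] pw cm v k by simp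
  have "of_nat m * c ^ k \<noteq> 0" using cm m by (auto simp: power_0_left)
  then have "w $ j = 0" if "j < n" for j
    using arg_cong[OF vv, of "\<lambda>x. x $ j"] v w that by auto
  then show False using w w0 by auto
qed

lemma strictly_upper_triangular_Jordan_chain:
  fixes N :: "'a :: comm_ring_1 mat"
  assumes N: "N \<in> carrier_mat n n" and su: "\<And>i j. j \<le> i \<Longrightarrow> i < n \<Longrightarrow> N $$ (i, j) = 0"
    and nz: "N \<noteq> 0\<^sub>m n n"
  shows "\<exists>v \<in> carrier_vec n. N *\<^sub>v v \<noteq> 0\<^sub>v n \<and> N *\<^sub>v (N *\<^sub>v v) = 0\<^sub>v n"
proof -
  define nonzero_col where "nonzero_col j \<longleftrightarrow> j < n \<and> (\<exists>i<n. N $$ (i, j) \<noteq> 0)" for j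
  have "\<exists>j. nonzero_col j"
    using nz N unfolding nonzero_col_def by (metis (no_types) eq_matI carrier_matD index_zero_mat(1,2,3))
  define j0 where "j0 = (LEAST j. nonzero_col j)"
  have j0: "nonzero_col j0" unfolding j0_def by (rule LeastI_ex) fact
  have zero_col: "N $$ (i, k) = 0" if "k < j0" "i < n" for i k
    using not_less_Least[of k nonzero_col] that j0 unfolding j0_def nonzero_col_def by auto
  define v :: "'a vec" where "v = unit_vec n j0"
  have j0n: "j0 < n" using j0 unfolding j0_def nonzero_col_def by auto
  have Nv: "(N *\<^sub>v v) $ i = N $$ (i, j0)" if "i < n" for i
    using N that j0n unfolding v_def by simp
  obtain i0 where "i0 < n" "N $$ (i0, j0) \<noteq> 0" using j0 unfolding nonzero_col_def by auto
  then have "N *\<^sub>v v \<noteq> 0\<^sub>v n" using Nv by auto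
  moreover have "(N *\<^sub>v (N *\<^sub>v v)) $ i = 0" if i: "i < n" for i
  proof -
    have "N $$ (i, k) * (N *\<^sub>v v) $ k = 0" if "k < n" for k
      using zero_col[OF _ i, of k] su[of j0 k] Nv[OF that] that by (cases "k < j0") auto
    then show ?thesis using N i by (simp add: scalar_prod_def)
  qed
  ultimately show ?thesis using N unfolding v_def by (intro bexI[of _ "unit_vec n j0"]) auto
qed

lemma smult_one_mat_mult_vec:
  assumes "x \<in> carrier_vec n"
  shows "(u \<cdot>\<^sub>m 1\<^sub>m n) *\<^sub>v x = (u :: 'a :: comm_ring_1) \<cdot>\<^sub>v x"
proof (intro eq_vecI)
  fix i assume "i < dim_vec (u \<cdot>\<^sub>v x)"
  then have i: "i < n" using assms by simp
  have "u * (if k = i then 1 else 0) * x $ k = (if k = i then u * x $ i else 0)" for k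
    by simp
  then show "((u \<cdot>\<^sub>m 1\<^sub>m n) *\<^sub>v x) $ i = (u \<cdot>\<^sub>v x) $ i"
    using i assms by (simp add: scalar_prod_def)
qed (use assms in simp)

lemma upper_triangular_finite_order_scalar:
  fixes B :: "'a :: field_char_0 mat"
  assumes B: "B \<in> carrier_mat n n" and ut: "upper_triangular B"
    and diag: "\<And>i. i < n \<Longrightarrow> B $$ (i, i) = u"
    and pw: "B ^\<^sub>m m = 1\<^sub>m n" and m: "m > 0"
  shows "B = u \<cdot>\<^sub>m 1\<^sub>m n"
proof (rule ccontr)
  assume ne: "B \<noteq> u \<cdot>\<^sub>m 1\<^sub>m n"
  define N where "N = B - u \<cdot>\<^sub>m 1\<^sub>m n"
  have N: "N \<in> carrier_mat n n" unfolding N_def by (simp add: minus_carrier_mat)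
  have BN: "B = u \<cdot>\<^sub>m 1\<^sub>m n + N" using B unfolding N_def by (intro eq_matI) auto
  have su: "N $$ (i, j) = 0" if "j \<le> i" "i < n" for i j
    using that B diag[of i] upper_triangularD[OF ut, of j i] unfolding N_def
    by (cases "j = i") auto
  have "N \<noteq> 0\<^sub>m n n" using ne BN N by auto
  then obtain v where v: "v \<in> carrier_vec n" and w0: "N *\<^sub>v v \<noteq> 0\<^sub>v n" and NNv: "N *\<^sub>v (N *\<^sub>v v) = 0\<^sub>v n"
    using strictly_upper_triangular_Jordan_chain[OF N su] by blast
  have Bx: "B *\<^sub>v x = u \<cdot>\<^sub>v x + N *\<^sub>v x" if "x \<in> carrier_vec n" for x
    unfolding BN using that N by (simp add: add_mult_distrib_mat_vec[of _ n n] smult_one_mat_mult_vec)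
  have "N *\<^sub>v v = 0\<^sub>v n"
    using N v NNv by (intro finite_order_Jordan_chain_trivial[OF B v _ pw m, where c = u]) (auto simp: Bx)
  with w0 show False ..
qed

lemma finite_order_trace_norm_scalar:
  fixes A :: "complex mat"
  assumes A: "A \<in> carrier_mat n n" and n: "n > 0" and m: "m > 0"
    and pw: "A ^\<^sub>m m = 1\<^sub>m n" and tr: "cmod (mat_trace A) = real n"
  shows "\<exists>u. A = u \<cdot>\<^sub>m 1\<^sub>m n"
proof -
  obtain es where "char_poly A = (\<Prod>a\<leftarrow>es. [:- a, 1:])"
    using char_poly_factorized[OF A] by auto
  then obtain B where B: "B \<in> carrier_mat n n" and ut: "upper_triangular B" and "similar_mat A B"
    using schur_decomposition_exists[OF A] by auto
  then obtain P Q where sw: "similar_mat_wit A B P Q" unfolding similar_mat_def by auto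
  note PQ = similar_mat_witD2[OF A sw]
  have "B ^\<^sub>m m = Q * A ^\<^sub>m m * P"
    by (rule similar_mat_wit_pow_id[OF similar_mat_wit_sym[OF sw]])
  then have pwB: "B ^\<^sub>m m = 1\<^sub>m n" using PQ(2,7) by (simp add: pw right_mult_one_mat[of Q n n])
  have "(B $$ (i, i)) ^ m = 1" if "i < n" for i
    using eigenvalue_finite_order_root_of_unity[OF B pwB upper_triangular_diag_eigenvalue[OF B ut that]] .
  then have unit: "cmod (B $$ (i, i)) = 1" if "i < n" for i
    using power_eq_1_iff[of "B $$ (i, i)" m] m that by simp
  have "mat_trace A = (\<Sum>i<n. B $$ (i, i))"
    using similar_mat_wit_mat_trace[OF sw] B by (simp add: mat_trace_def lessThan_atLeast0)
  then have "cmod (\<Sum>i<n. B $$ (i, i)) = real (card {..<n})" using tr by simp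
  then have diag: "B $$ (i, i) = (\<Sum>i<n. B $$ (i, i)) / of_nat n" if "i < n" for i
    using unit_sum_norm_eq_card_imp_average[of "{..<n}" "\<lambda>i. B $$ (i, i)" i] unit that by simp
  obtain u where "B = u \<cdot>\<^sub>m 1\<^sub>m n"
    using upper_triangular_finite_order_scalar[OF B ut diag pwB m] by blast
  then have "A = u \<cdot>\<^sub>m (P * Q)"
    unfolding PQ(3) using PQ(6,7)
    by (simp add: mult_smult_distrib[of P n n _ n] right_mult_one_mat[of P n n]
        mult_smult_assoc_mat[of P n n Q n])
  then show ?thesis unfolding PQ(1) ..
qed

section \<open>Characters of finite groups\<close>

context group
begin

lemma representation_carrier: "representation G n \<rho> \<Longrightarrow> g \<in> carrier G \<Longrightarrow> \<rho> g \<in> carrier_mat n n"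
  unfolding representation_def by auto

lemma representation_mult:
  "representation G n \<rho> \<Longrightarrow> g \<in> carrier G \<Longrightarrow> h \<in> carrier G \<Longrightarrow> \<rho> (g \<otimes> h) = \<rho> g * \<rho> h"
  unfolding representation_def by auto

lemma representation_one: "representation G n \<rho> \<Longrightarrow> \<rho> \<one> = 1\<^sub>m n"
  unfolding representation_def by auto

lemma representation_pow:
  assumes rep: "representation G n \<rho>" and g: "g \<in> carrier G"
  shows "\<rho> (g [^] k) = \<rho> g ^\<^sub>m k"
proof (induction k)
  case 0
  then show ?case using representation_one[OF rep] representation_carrier[OF rep g] by simp
next
  case (Suc k)
  then show ?case using representation_mult[OF rep nat_pow_closed[OF g] g] by simp
qed

lemma representation_finite_order:
  assumes "finite (carrier G)" and rep: "representation G n \<rho>" and g: "g \<in> carrier G"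
  shows "\<rho> g ^\<^sub>m Coset.order G = 1\<^sub>m n"
  using representation_pow[OF rep g, of "Coset.order G"] pow_order_eq_1[OF g] representation_one[OF rep]
  by simp

lemma representation_mult_inv_eq_one_iff:
  assumes rep: "representation G n \<rho>" and g: "g \<in> carrier G" and h: "h \<in> carrier G"
  shows "\<rho> (g \<otimes> inv h) = 1\<^sub>m n \<longleftrightarrow> \<rho> g = \<rho> h"
proof
  assume "\<rho> (g \<otimes> inv h) = 1\<^sub>m n"
  moreover have "\<rho> g = \<rho> (g \<otimes> inv h) * \<rho> h"
    using g h by (simp flip: representation_mult[OF rep] add: m_assoc)
  ultimately show "\<rho> g = \<rho> h" using representation_carrier[OF rep h] by simp
next
  assume "\<rho> g = \<rho> h"
  then have "\<rho> (g \<otimes> inv h) = \<rho> (h \<otimes> inv h)"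
    by (simp only: representation_mult[OF rep g inv_closed[OF h]] representation_mult[OF rep h inv_closed[OF h]])
  then show "\<rho> (g \<otimes> inv h) = 1\<^sub>m n" using h by (simp add: representation_one[OF rep])
qed

lemma representation_commutator_eq_one_iff:
  assumes rep: "representation G n \<rho>" and g: "g \<in> carrier G" and x: "x \<in> carrier G"
  shows "\<rho> (g \<otimes> x \<otimes> inv (x \<otimes> g)) = 1\<^sub>m n \<longleftrightarrow> \<rho> g * \<rho> x = \<rho> x * \<rho> g"
  using representation_mult_inv_eq_one_iff[OF rep, of "g \<otimes> x" "x \<otimes> g"] g x
  by (simp add: representation_mult[OF rep])

lemma representation_kernel_normal:
  assumes rep: "representation G n \<rho>"
  shows "{g \<in> carrier G. \<rho> g = 1\<^sub>m n} \<lhd> G"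
proof -
  have "subgroup {g \<in> carrier G. \<rho> g = 1\<^sub>m n} G"
  proof (rule subgroupI)
    fix a assume "a \<in> {g \<in> carrier G. \<rho> g = 1\<^sub>m n}"
    then show "inv a \<in> {g \<in> carrier G. \<rho> g = 1\<^sub>m n}"
      using representation_mult_inv_eq_one_iff[OF rep one_closed, of a] representation_one[OF rep] by auto
  next
    fix a b assume "a \<in> {g \<in> carrier G. \<rho> g = 1\<^sub>m n}" "b \<in> {g \<in> carrier G. \<rho> g = 1\<^sub>m n}"
    then show "a \<otimes> b \<in> {g \<in> carrier G. \<rho> g = 1\<^sub>m n}" by (simp add: representation_mult[OF rep])
  qed (use representation_one[OF rep] in auto)
  moreover have "\<rho> (x \<otimes> h \<otimes> inv x) = 1\<^sub>m n" if "x \<in> carrier G" "h \<in> carrier G" "\<rho> h = 1\<^sub>m n" for x h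
    using that representation_mult_inv_eq_one_iff[OF rep, of "x \<otimes> h" x]
    by (simp add: representation_mult[OF rep] right_mult_one_mat[OF representation_carrier[OF rep]])
  ultimately show ?thesis by (auto simp: normal_inv_iff)
qed

lemma char_center_iff_scalar:
  assumes fin: "finite (carrier G)" and rep: "representation G n \<rho>" and n: "n > 0"
    and g: "g \<in> carrier G"
  shows "g \<in> char_center G (\<lambda>g\<in>carrier G. mat_trace (\<rho> g)) \<longleftrightarrow> (\<exists>u. \<rho> g = u \<cdot>\<^sub>m 1\<^sub>m n)"
proof -
  have ord: "Coset.order G > 0" using fin by (simp add: order_gt_0_iff_finite)
  have "cmod (mat_trace (\<rho> g)) = real n \<longleftrightarrow> (\<exists>u. \<rho> g = u \<cdot>\<^sub>m 1\<^sub>m n)"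
  proof
    assume "cmod (mat_trace (\<rho> g)) = real n"
    then show "\<exists>u. \<rho> g = u \<cdot>\<^sub>m 1\<^sub>m n"
      using finite_order_trace_norm_scalar[OF representation_carrier[OF rep g] n ord
          representation_finite_order[OF fin rep g]] by blast
  next
    assume "\<exists>u. \<rho> g = u \<cdot>\<^sub>m 1\<^sub>m n"
    then obtain u where u: "\<rho> g = u \<cdot>\<^sub>m 1\<^sub>m n" ..
    have "u ^ Coset.order G \<cdot>\<^sub>m 1\<^sub>m n = 1 \<cdot>\<^sub>m 1\<^sub>m n"
      using representation_finite_order[OF fin rep g] unfolding u smult_one_mat_pow by simp
    then have "u ^ Coset.order G = 1" unfolding smult_one_mat_eq_iff[OF n] .
    then have "cmod u = 1" using power_eq_1_iff[of u "Coset.order G"] ord by simp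
    then show "cmod (mat_trace (\<rho> g)) = real n" by (simp add: u mat_trace_smult_one norm_mult)
  qed
  moreover have "mat_trace (\<rho> \<one>) = of_nat n" by (simp add: representation_one[OF rep] mat_trace_def)
  moreover have "complex_of_real (cmod (mat_trace (\<rho> g))) = of_nat n \<longleftrightarrow> cmod (mat_trace (\<rho> g)) = real n"
    by (metis of_real_eq_iff of_real_of_nat_eq)
  ultimately show ?thesis using g unfolding char_center_def by simp
qed

lemma char_kernel_eq:
  assumes fin: "finite (carrier G)" and rep: "representation G n \<rho>" and n: "n > 0"
  shows "char_kernel G (\<lambda>g\<in>carrier G. mat_trace (\<rho> g)) = {g \<in> carrier G. \<rho> g = 1\<^sub>m n}"
proof -
  have one: "mat_trace (\<rho> \<one>) = of_nat n" by (simp add: representation_one[OF rep] mat_trace_def)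
  have "mat_trace (\<rho> g) = of_nat n \<longleftrightarrow> \<rho> g = 1\<^sub>m n" if g: "g \<in> carrier G" for g
  proof
    assume tr: "mat_trace (\<rho> g) = of_nat n"
    then have "g \<in> char_center G (\<lambda>g\<in>carrier G. mat_trace (\<rho> g))"
      using g one unfolding char_center_def by simp
    then obtain u where u: "\<rho> g = u \<cdot>\<^sub>m 1\<^sub>m n" using char_center_iff_scalar[OF fin rep n g] by blast
    then have "u = 1" using tr n by (simp add: mat_trace_smult_one)
    then show "\<rho> g = 1\<^sub>m n" using u by simp
  qed (simp add: mat_trace_def)
  then show ?thesis unfolding char_kernel_def by (auto simp: one)
qed

text \<open>Schur's lemma: every eigenspace of \<open>A\<close> is a nonzero invariant subspace.\<close>
lemma irreducible_rep_commuting_scalar: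
  assumes irr: "irreducible_rep G n \<rho>" and A: "A \<in> carrier_mat n n"
    and comm: "\<And>x. x \<in> carrier G \<Longrightarrow> A * \<rho> x = \<rho> x * A"
  shows "\<exists>c. A = c \<cdot>\<^sub>m 1\<^sub>m n"
proof -
  have n: "n > 0" and rep: "representation G n \<rho>" using irr unfolding irreducible_rep_def by auto
  note \<rho> = representation_carrier[OF rep]
  obtain c where "eigenvalue A c" using complex_mat_eigenvalue_exists[OF A n] ..
  then obtain v where v: "eigenvector A v c" unfolding eigenvalue_def by auto
  define W where "W = {x \<in> carrier_vec n. A *\<^sub>v x = c \<cdot>\<^sub>v x}"
  have "invariant_subspace G n \<rho> W"
    unfolding invariant_subspace_def
  proof (intro conjI ballI allI)
    show "W \<subseteq> carrier_vec n" "0\<^sub>v n \<in> W" unfolding W_def using A by auto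
  next
    fix x y assume "x \<in> W" "y \<in> W"
    then show "x + y \<in> W" unfolding W_def using A
      by (simp add: mult_add_distrib_mat_vec[of _ n n] smult_add_distrib_vec[of _ n])
  next
    fix a x assume "x \<in> W"
    then show "a \<cdot>\<^sub>v x \<in> W" unfolding W_def using A
      by (simp add: mult_mat_vec[of _ n n] smult_smult_assoc mult.commute)
  next
    fix g x assume g: "g \<in> carrier G" and x: "x \<in> W"
    then have x': "x \<in> carrier_vec n" unfolding W_def by simp
    have "A *\<^sub>v (\<rho> g *\<^sub>v x) = (A * \<rho> g) *\<^sub>v x" using A \<rho>[OF g] x' by simp
    also have "\<dots> = \<rho> g *\<^sub>v (A *\<^sub>v x)" using A \<rho>[OF g] x' by (simp add: comm[OF g])
    also have "\<dots> = c \<cdot>\<^sub>v (\<rho> g *\<^sub>v x)" using x \<rho>[OF g] unfolding W_def by (simp add: mult_mat_vec[of _ n n])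
    finally show "\<rho> g *\<^sub>v x \<in> W" using x' \<rho>[OF g] unfolding W_def by simp
  qed
  then have "W = {0\<^sub>v n} \<or> W = carrier_vec n" using irr unfolding irreducible_rep_def by blast
  moreover have "v \<in> W" "v \<noteq> 0\<^sub>v n" using v A unfolding W_def eigenvector_def by auto
  ultimately have W: "W = carrier_vec n" by blast
  have "A = c \<cdot>\<^sub>m 1\<^sub>m n"
  proof (rule eq_matI)
    fix i j assume "i < dim_row (c \<cdot>\<^sub>m 1\<^sub>m n)" "j < dim_col (c \<cdot>\<^sub>m 1\<^sub>m n)"
    then have i: "i < n" and j: "j < n" by auto
    have "unit_vec n j \<in> W" using W j by simp
    then have "A *\<^sub>v unit_vec n j = c \<cdot>\<^sub>v unit_vec n j" unfolding W_def by simp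
    then have "(A *\<^sub>v unit_vec n j) $ i = (c \<cdot>\<^sub>v unit_vec n j) $ i" by simp
    then show "A $$ (i, j) = (c \<cdot>\<^sub>m 1\<^sub>m n) $$ (i, j)" using A i j by auto
  qed (use A in auto)
  then show ?thesis ..
qed

lemma char_center_iff_commutators_in_kernel:
  assumes fin: "finite (carrier G)" and \<chi>: "\<chi> \<in> Irr G" and g: "g \<in> carrier G"
  shows "g \<in> char_center G \<chi> \<longleftrightarrow> (\<forall>x\<in>carrier G. g \<otimes> x \<otimes> inv (x \<otimes> g) \<in> char_kernel G \<chi>)"
proof -
  obtain n \<rho> where irr: "irreducible_rep G n \<rho>" and \<chi>_def: "\<chi> = (\<lambda>g\<in>carrier G. mat_trace (\<rho> g))"
    using \<chi> unfolding Irr_def by auto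
  have n: "n > 0" and rep: "representation G n \<rho>" using irr unfolding irreducible_rep_def by auto
  note \<rho> = representation_carrier[OF rep]
  have "g \<in> char_center G \<chi> \<longleftrightarrow> (\<exists>u. \<rho> g = u \<cdot>\<^sub>m 1\<^sub>m n)"
    unfolding \<chi>_def by (rule char_center_iff_scalar[OF fin rep n g])
  also have "\<dots> \<longleftrightarrow> (\<forall>x\<in>carrier G. \<rho> g * \<rho> x = \<rho> x * \<rho> g)"
  proof
    assume "\<exists>u. \<rho> g = u \<cdot>\<^sub>m 1\<^sub>m n"
    then obtain u where u: "\<rho> g = u \<cdot>\<^sub>m 1\<^sub>m n" ..
    show "\<forall>x\<in>carrier G. \<rho> g * \<rho> x = \<rho> x * \<rho> g"
      unfolding u using \<rho>
      by (simp add: mult_smult_distrib[of _ n n _ n] mult_smult_assoc_mat[of _ n n _ n]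
          left_mult_one_mat[OF \<rho>] right_mult_one_mat[OF \<rho>])
  qed (use irreducible_rep_commuting_scalar[OF irr \<rho>[OF g]] in blast)
  also have "\<dots> \<longleftrightarrow> (\<forall>x\<in>carrier G. g \<otimes> x \<otimes> inv (x \<otimes> g) \<in> char_kernel G \<chi>)"
    unfolding \<chi>_def char_kernel_eq[OF fin rep n]
    using g by (intro ball_cong) (simp_all add: representation_commutator_eq_one_iff[OF rep])
  finally show ?thesis .
qed

lemma char_kernel_normal:
  assumes fin: "finite (carrier G)" and \<chi>: "\<chi> \<in> Irr G"
  shows "char_kernel G \<chi> \<lhd> G"
proof -
  obtain n \<rho> where irr: "irreducible_rep G n \<rho>" and \<chi>_def: "\<chi> = (\<lambda>g\<in>carrier G. mat_trace (\<rho> g))"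
    using \<chi> unfolding Irr_def by auto
  have n: "n > 0" and rep: "representation G n \<rho>" using irr unfolding irreducible_rep_def by auto
  show ?thesis unfolding \<chi>_def char_kernel_eq[OF fin rep n] by (rule representation_kernel_normal[OF rep])
qed

end

section \<open>Centres of quotients\<close>

context group
begin

lemma rcos_eq_iff:
  assumes N: "subgroup N G" and a: "a \<in> carrier G" and b: "b \<in> carrier G"
  shows "N #> a = N #> b \<longleftrightarrow> a \<otimes> inv b \<in> N"
proof
  assume "N #> a = N #> b"
  then have "a \<in> N #> b" using rcos_self[OF a N] by simp
  then show "a \<otimes> inv b \<in> N" using subgroup.rcos_module_imp[OF N is_group b] by simp
next
  assume "a \<otimes> inv b \<in> N"
  then have "a \<in> N #> b" using subgroup.rcos_module_rev[OF N is_group b a] by simp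
  then show "N #> a = N #> b" using repr_independence[OF _ b N] by simp
qed

lemma Z_rel_eq:
  assumes N: "N \<lhd> G"
  shows "Z_rel G N = {g \<in> carrier G. \<forall>x \<in> carrier G. g \<otimes> x \<otimes> inv (x \<otimes> g) \<in> N}"
proof -
  interpret normal N G by (rule N)
  have "N #> g \<in> group_center (G Mod N) \<longleftrightarrow> (\<forall>x \<in> carrier G. g \<otimes> x \<otimes> inv (x \<otimes> g) \<in> N)"
    if g: "g \<in> carrier G" for g
  proof -
    have "N #> g \<in> group_center (G Mod N) \<longleftrightarrow>
          (\<forall>x \<in> carrier G. (N #> g) <#> (N #> x) = (N #> x) <#> (N #> g))"
      using g unfolding group_center_def FactGroup_def RCOSETS_def by auto
    also have "\<dots> \<longleftrightarrow> (\<forall>x \<in> carrier G. N #> (g \<otimes> x) = N #> (x \<otimes> g))"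
      using g by (simp add: rcos_sum)
    also have "\<dots> \<longleftrightarrow> (\<forall>x \<in> carrier G. g \<otimes> x \<otimes> inv (x \<otimes> g) \<in> N)"
      using g by (simp add: rcos_eq_iff[OF subgroup_axioms])
    finally show ?thesis .
  qed
  then show ?thesis unfolding Z_rel_def by auto
qed

lemma normal_carrier_Int_INTER:
  assumes N: "\<And>i. i \<in> I \<Longrightarrow> N i \<lhd> G"
  shows "carrier G \<inter> (\<Inter>i\<in>I. N i) \<lhd> G"
proof -
  have "carrier G \<inter> (\<Inter>i\<in>I. N i) = \<Inter>(insert (carrier G) (N ` I))" by auto
  moreover have "subgroup (\<Inter>(insert (carrier G) (N ` I))) G"
    using N normal_imp_subgroup subgroup_self by (intro subgroups_Inter) auto
  moreover have "x \<otimes> h \<otimes> inv x \<in> N i" if "i \<in> I" "x \<in> carrier G" "h \<in> N i" for i x h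
    using normal.inv_op_closed2[OF N] that by blast
  ultimately show ?thesis unfolding normal_inv_iff by auto
qed

lemma Z_rel_carrier_Int_INTER:
  assumes N: "\<And>i. i \<in> I \<Longrightarrow> N i \<lhd> G"
  shows "Z_rel G (carrier G \<inter> (\<Inter>i\<in>I. N i)) = carrier G \<inter> (\<Inter>i\<in>I. Z_rel G (N i))"
proof -
  have K: "carrier G \<inter> (\<Inter>i\<in>I. N i) \<lhd> G" by (rule normal_carrier_Int_INTER[OF N])
  have "g \<in> Z_rel G (carrier G \<inter> (\<Inter>i\<in>I. N i)) \<longleftrightarrow> (\<forall>i\<in>I. g \<in> Z_rel G (N i))"
    if g: "g \<in> carrier G" for g
    using g unfolding Z_rel_eq[OF K] by (auto simp: Z_rel_eq[OF N])
  then show ?thesis using Z_rel_eq[OF K] by blast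
qed

lemma Z_rel_char_kernel:
  assumes fin: "finite (carrier G)" and \<chi>: "\<chi> \<in> Irr G"
  shows "Z_rel G (char_kernel G \<chi>) = char_center G \<chi>"
proof -
  have "g \<in> Z_rel G (char_kernel G \<chi>) \<longleftrightarrow> g \<in> char_center G \<chi>" for g
    unfolding Z_rel_eq[OF char_kernel_normal[OF fin \<chi>]]
    using char_center_iff_commutators_in_kernel[OF fin \<chi>, of g] by (auto simp: char_center_def)
  then show ?thesis by blast
qed

end

theorem lemma3p9:
  fixes G :: "('a, 'b) monoid_scheme"
  assumes "group G" and "finite (carrier G)" and "\<not> comm_group G"
  shows "Z_rel G (KK G) = carrier G \<inter> (\<Inter>\<psi> \<in> XX G. char_center G \<psi>)"
proof -
  interpret group G by fact
  have irr: "\<psi> \<in> Irr G" if "\<psi> \<in> XX G" for \<psi> using that unfolding XX_def by simp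
  have "Z_rel G (KK G) = carrier G \<inter> (\<Inter>\<psi>\<in>XX G. Z_rel G (char_kernel G \<psi>))"
    unfolding KK_def using char_kernel_normal[OF assms(2) irr] by (rule Z_rel_carrier_Int_INTER)
  also have "\<dots> = carrier G \<inter> (\<Inter>\<psi>\<in>XX G. char_center G \<psi>)"
    using Z_rel_char_kernel[OF assms(2) irr] by simp
  finally show ?thesis .
qed

end
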